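(* Let $A\in\mathcal{PM}(n)$. A row vector $v\in\{0,1\}^n$ is a poset vector of $A$ if and only if $vA=v$, where the product is the Boolean matrix product. Equivalently, the set of order ideals of $P_A$ equals $\{\mathrm{supp}(v): v\in\{0,1\}^n,\ vA=v\}$.
   Context: Let $X_n=\{0,1,\ldots,n-1\}$. A naturally labeled (NL) poset on $X_n$ is a partial order $\preceq$ on $X_n$ such that $x\preceq y$ implies $x\le y$ in the usual integer order. Its poset matrix is the $n\times n$ $(0,1)$-matrix $A=(a_{i,j})_{i,j\in X_n}$ with $a_{i,j}=1$ if $j\preceq i$ and $0$ otherwise; $\mathcal{PM}(n)$ is the set of all such matrices and $P_A$ the NL poset with poset matrix $A$. Boolean arithmetic: $1+1=1$, so $(vA)_j=\max_i v_ia_{i,j}$. For $v\in\{0,1\}^n$, $A^v=\begin{bmatrix}A&\mathbf{0}\\ v&1\end{bmatrix}$, and $v$ is a poset vector of $A$ if $A^v\in\mathcal{PM}(n+1)$. $\mathrm{supp}(v)=\{j: v_j=1\}$; an order ideal is a downward closed subset. *)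

theory Defs
  imports Main
begin

text \<open>Matrices over {0,1} are represented as nat \<Rightarrow> nat \<Rightarrow> bool (True = 1),
  row vectors as nat \<Rightarrow> bool; only indices in X_n = {0..<n} are meaningful.\<close>

definition NL_poset :: "nat \<Rightarrow> (nat \<Rightarrow> nat \<Rightarrow> bool) \<Rightarrow> bool" where
  "NL_poset n le \<longleftrightarrow>
     (\<forall>x<n. le x x) \<and>
     (\<forall>x<n. \<forall>y<n. le x y \<and> le y x \<longrightarrow> x = y) \<and>
     (\<forall>x<n. \<forall>y<n. \<forall>z<n. le x y \<and> le y z \<longrightarrow> le x z) \<and>
     (\<forall>x<n. \<forall>y<n. le x y \<longrightarrow> x \<le> y)"

definition is_PM :: "nat \<Rightarrow> (nat \<Rightarrow> nat \<Rightarrow> bool) \<Rightarrow> bool" where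
  "is_PM n A \<longleftrightarrow> (\<exists>le. NL_poset n le \<and> (\<forall>i<n. \<forall>j<n. A i j = le j i))"

definition poset_of :: "(nat \<Rightarrow> nat \<Rightarrow> bool) \<Rightarrow> nat \<Rightarrow> nat \<Rightarrow> bool" where
  "poset_of A x y = A y x"

text \<open>A^v = [[A, 0], [v, 1]], an (n+1)\<times>(n+1) matrix.\<close>
definition ext_mat :: "nat \<Rightarrow> (nat \<Rightarrow> nat \<Rightarrow> bool) \<Rightarrow> (nat \<Rightarrow> bool) \<Rightarrow> nat \<Rightarrow> nat \<Rightarrow> bool" where
  "ext_mat n A v i j =
     (if i < n \<and> j < n then A i j
      else if i = n \<and> j < n then v j
      else if i < n \<and> j = n then False
      else True)"

definition poset_vector :: "nat \<Rightarrow> (nat \<Rightarrow> nat \<Rightarrow> bool) \<Rightarrow> (nat \<Rightarrow> bool) \<Rightarrow> bool" where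
  "poset_vector n A v \<longleftrightarrow> is_PM (Suc n) (ext_mat n A v)"

definition bvecmat :: "nat \<Rightarrow> (nat \<Rightarrow> bool) \<Rightarrow> (nat \<Rightarrow> nat \<Rightarrow> bool) \<Rightarrow> nat \<Rightarrow> bool" where
  "bvecmat n v A j \<longleftrightarrow> (\<exists>i<n. v i \<and> A i j)"

definition supp :: "nat \<Rightarrow> (nat \<Rightarrow> bool) \<Rightarrow> nat set" where
  "supp n v = {j. j < n \<and> v j}"

definition order_ideal :: "nat \<Rightarrow> (nat \<Rightarrow> nat \<Rightarrow> bool) \<Rightarrow> nat set \<Rightarrow> bool" where
  "order_ideal n A I \<longleftrightarrow> I \<subseteq> {0..<n} \<and>
     (\<forall>x\<in>I. \<forall>y<n. poset_of A y x \<longrightarrow> y \<in> I)"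

end

theory Submission
  imports Defs
begin

text \<open>Row n of A^v lists the elements placed below the new element n. Adjoining n to an NL
  poset on X_n above exactly the elements of supp v keeps reflexivity, antisymmetry and the
  natural labelling for free; transitivity through n holds precisely when supp v is downward
  closed. So the poset vectors are the indicator vectors of order ideals, and since A has a full
  diagonal, the Boolean equation vA = v expresses the same downward closure.\<close>

lemma order_ideal_supp_iff:
  "order_ideal n A (supp n v) \<longleftrightarrow> (\<forall>i<n. \<forall>j<n. v i \<and> A i j \<longrightarrow> v j)"
  unfolding order_ideal_def supp_def poset_of_def by auto

lemma supp_indicator:
  assumes "I \<subseteq> {0..<n}"
  shows "supp n (\<lambda>j. j \<in> I) = I"
  using assms unfolding supp_def by auto

lemma order_ideals_eq_supps:
  "{I. order_ideal n A I} = {supp n v | v. order_ideal n A (supp n v)}"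
proof (intro equalityI subsetI)
  fix I assume "I \<in> {I. order_ideal n A I}"
  then have ideal: "order_ideal n A I" by simp
  then have "supp n (\<lambda>j. j \<in> I) = I"
    unfolding order_ideal_def by (simp add: supp_indicator)
  with ideal show "I \<in> {supp n v | v. order_ideal n A (supp n v)}"
    by (intro CollectI exI[of _ "\<lambda>j. j \<in> I"]) simp
qed auto

lemma NL_poset_refl: "NL_poset n le \<Longrightarrow> x < n \<Longrightarrow> le x x"
  unfolding NL_poset_def by blast

lemma NL_poset_trans:
  "NL_poset n le \<Longrightarrow> x < n \<Longrightarrow> y < n \<Longrightarrow> z < n \<Longrightarrow> le x y \<Longrightarrow> le y z \<Longrightarrow> le x z"
  unfolding NL_poset_def by blast

lemma is_PM_diag:
  assumes "is_PM n A" and "i < n"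
  shows "A i i"
proof -
  obtain le where "NL_poset n le" and "\<forall>i<n. \<forall>j<n. A i j = le j i"
    using assms(1) unfolding is_PM_def by blast
  with assms(2) show ?thesis
    using NL_poset_refl by simp
qed

lemma bvecmat_fixed_iff_order_ideal:
  assumes "\<forall>j<n. A j j"
  shows "(\<forall>j<n. bvecmat n v A j = v j) \<longleftrightarrow> order_ideal n A (supp n v)"
  unfolding order_ideal_supp_iff bvecmat_def using assms by blast

lemma NL_poset_extend:
  assumes "NL_poset n le" and down_closed: "\<forall>x<n. \<forall>y<n. le x y \<and> v y \<longrightarrow> v x"
  shows "NL_poset (Suc n) (\<lambda>x y. if y = n then x = n \<or> v x else x \<noteq> n \<and> le x y)"
    (is "NL_poset _ ?le")
proof -
  have refl: "\<forall>x<n. le x x" and antisym: "\<forall>x<n. \<forall>y<n. le x y \<and> le y x \<longrightarrow> x = y"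
    and trans: "\<forall>x<n. \<forall>y<n. \<forall>z<n. le x y \<and> le y z \<longrightarrow> le x z"
    and natural: "\<forall>x<n. \<forall>y<n. le x y \<longrightarrow> x \<le> y"
    using assms(1) unfolding NL_poset_def by blast+
  have "?le x z" if "x < Suc n" "y < Suc n" "z < Suc n" "?le x y" "?le y z" for x y z
  proof (cases "z = n")
    case True
    show ?thesis
    proof (cases "y = n")
      case False
      then have "x < n" "y < n" "le x y" "v y"
        using that \<open>z = n\<close> by (simp_all split: if_splits)
      then have "v x" using down_closed by blast
      then show ?thesis using \<open>z = n\<close> by simp
    qed (use that \<open>z = n\<close> in simp)
  next
    case False
    then have "x < n" "y < n" "z < n" "le x y" "le y z"
      using that by (simp_all split: if_splits)
    then have "le x z" using trans by blast
    then show ?thesis using \<open>z \<noteq> n\<close> \<open>x < n\<close> by simp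
  qed
  moreover have "x = y" if "x < Suc n" "y < Suc n" "?le x y" "?le y x" for x y
  proof -
    have "x < n \<and> y < n \<and> le x y \<and> le y x \<or> x = y"
      using that by (simp add: less_Suc_eq split: if_splits)
    then show "x = y" using antisym by blast
  qed
  moreover have "x \<le> y" if "x < Suc n" "y < Suc n" "?le x y" for x y
  proof -
    have "x < n \<and> y < n \<and> le x y \<or> y = n"
      using that by (simp add: less_Suc_eq split: if_splits)
    then show "x \<le> y" using natural \<open>x < Suc n\<close> by auto
  qed
  moreover have "?le x x" if "x < Suc n" for x
    using that refl less_Suc_eq by auto
  ultimately show ?thesis
    unfolding NL_poset_def by blast
qed

lemma poset_vector_iff_order_ideal:
  assumes "is_PM n A"
  shows "poset_vector n A v \<longleftrightarrow> order_ideal n A (supp n v)"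
proof
  assume "poset_vector n A v"
  then obtain le where le: "NL_poset (Suc n) le"
    and ext: "\<forall>i<Suc n. \<forall>j<Suc n. ext_mat n A v i j = le j i"
    unfolding poset_vector_def is_PM_def by blast
  have "v j" if "i < n" "j < n" "v i" "A i j" for i j
  proof -
    have "le j i" using ext[rule_format, of i j] that by (simp add: ext_mat_def)
    moreover have "le i n" using ext[rule_format, of n i] that by (simp add: ext_mat_def)
    ultimately have "le j n" using NL_poset_trans[OF le, of j i n] that by (simp add: less_SucI)
    then show "v j" using ext[rule_format, of n j] that by (simp add: ext_mat_def)
  qed
  then show "order_ideal n A (supp n v)"
    unfolding order_ideal_supp_iff by blast
next
  assume ideal: "order_ideal n A (supp n v)"
  obtain le where le: "NL_poset n le" and A_le: "\<forall>i<n. \<forall>j<n. A i j = le j i"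
    using assms unfolding is_PM_def by blast
  define le' where "le' = (\<lambda>x y. if y = n then x = n \<or> v x else x \<noteq> n \<and> le x y)"
  have "\<forall>x<n. \<forall>y<n. le x y \<and> v y \<longrightarrow> v x"
    using ideal A_le unfolding order_ideal_supp_iff by metis
  then have "NL_poset (Suc n) le'"
    unfolding le'_def by (rule NL_poset_extend[OF le])
  moreover have "ext_mat n A v i j = le' j i" if "i < Suc n" "j < Suc n" for i j
    using that A_le unfolding ext_mat_def le'_def by (cases "i = n"; cases "j = n") simp_all
  ultimately show "poset_vector n A v"
    unfolding poset_vector_def is_PM_def by blast
qed

theorem theorem5p3:
  fixes n :: nat and A :: "nat \<Rightarrow> nat \<Rightarrow> bool"
  assumes "is_PM n A"
  shows "(\<forall>v. poset_vector n A v \<longleftrightarrow> (\<forall>j<n. bvecmat n v A j = v j))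
       \<and> {I. order_ideal n A I} = {supp n v | v. \<forall>j<n. bvecmat n v A j = v j}"
proof -
  have fixed_iff: "(\<forall>j<n. bvecmat n v A j = v j) \<longleftrightarrow> order_ideal n A (supp n v)" for v
    by (rule bvecmat_fixed_iff_order_ideal) (simp add: is_PM_diag[OF assms])
  have "{I. order_ideal n A I} = {supp n v | v. order_ideal n A (supp n v)}"
    by (rule order_ideals_eq_supps)
  then show ?thesis
    by (simp only: fixed_iff poset_vector_iff_order_ideal[OF assms] simp_thms)
qed

end
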